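(* Let $n\ge 1$ be an integer, $a>0$, and let $a_0,\dots,a_{n-1}:((-a,a)\setminus\{0\})\times\mathbb{K}\to\mathbb{K}$ be arbitrary functions, where $\mathbb{K}=\mathbb{R}$ or $\mathbb{C}$. Let $f\in C^\infty(-a,a)$ be a solution of $$f^{(n)}(x)+a_{n-1}(x,f(x))f^{(n-1)}(x)+\cdots+a_0(x,f(x))f(x)=0,\qquad x\in(-a,a)\setminus\{0\},$$ satisfying $f(0)=f'(0)=\cdots=f^{(n-1)}(0)=0$. If there are $M>0$ and $\eta\in(0,a)$ such that $|a_k(x,f(x))|\le M$ for all $0<|x|<\eta$ and $k=0,1,\dots,n-1$, then there exists $\delta>0$ such that $f\equiv 0$ on $[-\delta,\delta]$.
   Context: The coefficients may be singular at $x=0$; the equation is only required to hold for $x\neq 0$. *)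

theory Defs
  imports "HOL-Analysis.Analysis"
begin

fun nth_deriv :: "nat \<Rightarrow> (real \<Rightarrow> 'k::real_normed_vector) \<Rightarrow> real \<Rightarrow> 'k" where
  "nth_deriv 0 f = f"
| "nth_deriv (Suc k) f = (\<lambda>x. vector_derivative (nth_deriv k f) (at x))"

definition smooth_on_interval :: "real \<Rightarrow> (real \<Rightarrow> 'k::real_normed_vector) \<Rightarrow> bool" where
  "smooth_on_interval a f \<longleftrightarrow>
     (\<forall>k. \<forall>x\<in>{-a<..<a}. nth_deriv k f differentiable (at x))"

text \<open>The statement of Corollary 3 for a fixed scalar field K (the type 'k).
  The coefficients A k x y stand for a_k(x,y); only their values for
  x in (-a,a) minus {0} are used.\<close>
definition corollary3_claim :: "'k::real_normed_field itself \<Rightarrow> bool" where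
  "corollary3_claim (_ :: 'k itself) \<longleftrightarrow>
    (\<forall>(n::nat) (a::real) (A :: nat \<Rightarrow> real \<Rightarrow> 'k \<Rightarrow> 'k) (f :: real \<Rightarrow> 'k) (M::real) (\<eta>::real).
       n \<ge> 1 \<longrightarrow> a > 0 \<longrightarrow>
       smooth_on_interval a f \<longrightarrow>
       (\<forall>x\<in>{-a<..<a}. x \<noteq> 0 \<longrightarrow>
          nth_deriv n f x + (\<Sum>k<n. A k x (f x) * nth_deriv k f x) = 0) \<longrightarrow>
       (\<forall>k<n. nth_deriv k f 0 = 0) \<longrightarrow>
       M > 0 \<longrightarrow> 0 < \<eta> \<longrightarrow> \<eta> < a \<longrightarrow>
       (\<forall>x. 0 < \<bar>x\<bar> \<and> \<bar>x\<bar> < \<eta> \<longrightarrow> (\<forall>k<n. norm (A k x (f x)) \<le> M)) \<longrightarrow>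
       (\<exists>\<delta>>0. \<forall>x\<in>{-\<delta>..\<delta>}. f x = 0))"

end

theory Submission
  imports Defs
begin

(* Put S(t) = |f(t)| + |f'(t)| + ... + |f^(n-1)(t)|.  Near 0 (but off 0)
   the equation together with the bound M on the coefficients gives
   |f^(k+1)(x)| <= (M+1) S(x) for all k < n.  On a small interval [-d,d] let t0 be a
   maximum point of S.  Since every f^(k) vanishes at 0, the mean value inequality gives
   |f^(k)(t0)| <= d (M+1) S(t0), hence S(t0) <= n d (M+1) S(t0), and for n d (M+1) < 1
   this forces S(t0) = 0, i.e. S, and in particular f, vanishes on [-d,d]. *)

lemma norm_diff_le_derivative_bound:
  fixes g :: "real \<Rightarrow> 'a::real_normed_vector"
  assumes deriv: "\<And>x. min s t \<le> x \<Longrightarrow> x \<le> max s t \<Longrightarrow> (g has_vector_derivative g' x) (at x)"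
    and bound: "\<And>x. min s t < x \<Longrightarrow> x < max s t \<Longrightarrow> norm (g' x) \<le> B"
  shows "norm (g t - g s) \<le> B * \<bar>t - s\<bar>"
proof -
  have ordered: "norm (g v - g u) \<le> B * (v - u)"
    if "u < v" "min s t = u" "max s t = v" for u v
  proof -
    have "continuous_on {u..v} g"
      using that by (intro continuous_at_imp_continuous_on ballI has_vector_derivative_continuous[OF deriv]) auto
    then have "norm (g v - g u) \<le> B * v - B * u"
      using that deriv bound
      by (intro differentiable_bound_general[where \<phi>="\<lambda>x. B * x" and \<phi>'="\<lambda>_. B" and f'=g'])
        (auto intro!: continuous_intros derivative_eq_intros
          simp: has_real_derivative_iff_has_vector_derivative[symmetric])
    then show ?thesis by (simp add: algebra_simps)
  qed
  consider "s = t" | "s < t" | "t < s" by linarith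
  then show ?thesis
  proof cases
    case 3
    then show ?thesis using ordered[of t s] by (simp add: norm_minus_commute)
  qed (use ordered[of s t] in auto)
qed

lemma derivatives_controlled_imp_vanish:
  fixes g g' :: "nat \<Rightarrow> real \<Rightarrow> 'a::real_normed_vector"
  assumes "0 \<le> C" and small: "real n * \<delta> * C < 1"
    and deriv: "\<And>k x. k < n \<Longrightarrow> x \<in> {-\<delta>..\<delta>} \<Longrightarrow> (g k has_vector_derivative g' k x) (at x)"
    and zero: "\<And>k. k < n \<Longrightarrow> g k 0 = 0"
    and bound: "\<And>k x. k < n \<Longrightarrow> x \<in> {-\<delta>..\<delta>} \<Longrightarrow> x \<noteq> 0 \<Longrightarrow>
                  norm (g' k x) \<le> C * (\<Sum>j<n. norm (g j x))"
    and "k < n" "x \<in> {-\<delta>..\<delta>}"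
  shows "g k x = 0"
proof -
  define S where "S t = (\<Sum>j<n. norm (g j t))" for t
  have S_nonneg: "0 \<le> S t" for t unfolding S_def by (simp add: sum_nonneg)
  have "continuous_on {-\<delta>..\<delta>} (g j)" if "j < n" for j
    using that by (intro continuous_at_imp_continuous_on ballI has_vector_derivative_continuous[OF deriv]) auto
  then have "continuous_on {-\<delta>..\<delta>} S"
    unfolding S_def by (intro continuous_intros) auto
  then obtain t0 where t0: "t0 \<in> {-\<delta>..\<delta>}" and t0_max: "\<And>t. t \<in> {-\<delta>..\<delta>} \<Longrightarrow> S t \<le> S t0"
    using continuous_attains_sup[of "{-\<delta>..\<delta>}" S] \<open>x \<in> {-\<delta>..\<delta>}\<close> by fastforce
  have each: "norm (g j t0) \<le> \<delta> * C * S t0" if "j < n" for j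
  proof -
    have "norm (g j t0 - g j 0) \<le> C * S t0 * \<bar>t0 - 0\<bar>"
    proof (rule norm_diff_le_derivative_bound)
      show "(g j has_vector_derivative g' j y) (at y)" if "min 0 t0 \<le> y" "y \<le> max 0 t0" for y
      proof -
        have "y \<in> {-\<delta>..\<delta>}" using that t0 by (simp add: min_def max_def split: if_splits)
        then show ?thesis by (rule deriv[OF \<open>j < n\<close>])
      qed
      show "norm (g' j y) \<le> C * S t0" if "min 0 t0 < y" "y < max 0 t0" for y
      proof -
        have y: "y \<in> {-\<delta>..\<delta>}" "y \<noteq> 0" using that t0 by auto
        then have "norm (g' j y) \<le> C * S y" using bound \<open>j < n\<close> unfolding S_def by blast
        also have "\<dots> \<le> C * S t0" using t0_max[OF y(1)] \<open>0 \<le> C\<close> by (rule mult_left_mono)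
        finally show ?thesis .
      qed
    qed
    also have "\<dots> \<le> C * S t0 * \<delta>"
      using t0 \<open>0 \<le> C\<close> S_nonneg by (intro mult_left_mono) auto
    finally show ?thesis using zero \<open>j < n\<close> by (simp add: mult_ac)
  qed
  have "S t0 \<le> (\<Sum>j<n. \<delta> * C * S t0)"
    by (subst (1) S_def) (intro sum_mono each, simp)
  also have "\<dots> = (real n * \<delta> * C) * S t0" by simp
  finally have "S t0 = 0"
    using small S_nonneg[of t0] by (metis mult_le_cancel_right1 not_le order.antisym)
  then have "S x = 0" using t0_max[OF \<open>x \<in> {-\<delta>..\<delta>}\<close>] S_nonneg[of x] by simp
  then show ?thesis
    unfolding S_def using \<open>k < n\<close> by (simp add: sum_nonneg_eq_0_iff)
qed

lemma smooth_on_interval_has_derivative: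
  assumes "smooth_on_interval a f" "x \<in> {-a<..<a}"
  shows "(nth_deriv k f has_vector_derivative nth_deriv (Suc k) f x) (at x)"
  using assms unfolding smooth_on_interval_def by (simp add: vector_derivative_works)

text \<open>Where the equation holds and its coefficients are bounded by \<open>M\<close>, each of the
  derivatives \<open>f', ..., f^(n)\<close> is bounded by \<open>M + 1\<close> times the sum of the norms of
  \<open>f, ..., f^(n-1)\<close>: the top one by the equation, the others trivially.\<close>
lemma ode_derivative_bound:
  fixes f :: "real \<Rightarrow> 'k::real_normed_field" and A :: "nat \<Rightarrow> real \<Rightarrow> 'k \<Rightarrow> 'k"
  assumes ode: "nth_deriv n f x + (\<Sum>j<n. A j x (f x) * nth_deriv j f x) = 0"
    and coeff: "\<And>j. j < n \<Longrightarrow> norm (A j x (f x)) \<le> M"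
    and "0 \<le> M" "k < n"
  shows "norm (nth_deriv (Suc k) f x) \<le> (M + 1) * (\<Sum>j<n. norm (nth_deriv j f x))"
proof -
  let ?S = "\<Sum>j<n. norm (nth_deriv j f x)"
  have "0 \<le> ?S" by (simp add: sum_nonneg)
  show ?thesis
  proof (cases "Suc k < n")
    case True
    have "norm (nth_deriv (Suc k) f x) \<le> ?S" using True by (intro member_le_sum) auto
    also have "\<dots> \<le> (M + 1) * ?S" using \<open>0 \<le> ?S\<close> \<open>0 \<le> M\<close> by (simp add: mult_le_cancel_right1)
    finally show ?thesis .
  next
    case False
    then have "Suc k = n" using \<open>k < n\<close> by simp
    have "norm (nth_deriv n f x) = norm (\<Sum>j<n. A j x (f x) * nth_deriv j f x)"
      using ode by (simp add: eq_neg_iff_add_eq_0 [symmetric])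
    also have "\<dots> \<le> (\<Sum>j<n. M * norm (nth_deriv j f x))"
      using coeff by (intro order.trans[OF norm_sum] sum_mono)
        (auto simp: norm_mult intro: mult_right_mono)
    also have "\<dots> \<le> (M + 1) * ?S"
      using \<open>0 \<le> ?S\<close> by (simp add: sum_distrib_left [symmetric] mult_right_mono)
    finally show ?thesis using \<open>Suc k = n\<close> by simp
  qed
qed

text \<open>The interval \<open>[-\<delta>,\<delta>]\<close> is chosen inside
  the region where the coefficients are bounded and so small that \<open>n \<delta> (M + 1) < 1\<close>.\<close>
lemma corollary3_claim_any_field: "corollary3_claim TYPE('k::real_normed_field)"
  unfolding corollary3_claim_def
proof (intro allI impI)
  fix n :: nat and a M \<eta> :: real and A :: "nat \<Rightarrow> real \<Rightarrow> 'k \<Rightarrow> 'k" and f :: "real \<Rightarrow> 'k"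
  assume "1 \<le> n" and smooth: "smooth_on_interval a f"
    and ode: "\<forall>x\<in>{-a<..<a}. x \<noteq> 0 \<longrightarrow>
          nth_deriv n f x + (\<Sum>k<n. A k x (f x) * nth_deriv k f x) = 0"
    and init: "\<forall>k<n. nth_deriv k f 0 = 0"
    and "M > 0" "0 < \<eta>" "\<eta> < a"
    and coeff: "\<forall>x. 0 < \<bar>x\<bar> \<and> \<bar>x\<bar> < \<eta> \<longrightarrow> (\<forall>k<n. norm (A k x (f x)) \<le> M)"
  define \<delta> where "\<delta> = min (\<eta>/2) (1 / (2 * real n * (M + 1)))"
  have "0 < \<delta>" "\<delta> < \<eta>" unfolding \<delta>_def using \<open>0 < \<eta>\<close> \<open>M > 0\<close> \<open>1 \<le> n\<close> by auto
  have "real n * \<delta> * (M + 1) \<le> real n * (1 / (2 * real n * (M + 1))) * (M + 1)"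
    unfolding \<delta>_def using \<open>M > 0\<close> by (intro mult_right_mono mult_left_mono) auto
  also have "\<dots> = 1/2"
  proof -
    have "real n * (M + 1) \<noteq> 0" using \<open>1 \<le> n\<close> \<open>M > 0\<close> by simp
    then show ?thesis by (simp add: field_simps)
  qed
  finally have small: "real n * \<delta> * (M + 1) < 1" by simp
  have vanish: "nth_deriv k f x = 0" if "k < n" "x \<in> {-\<delta>..\<delta>}" for k x
  proof (rule derivatives_controlled_imp_vanish[where g="\<lambda>k. nth_deriv k f"
        and g'="\<lambda>k. nth_deriv (Suc k) f" and C="M + 1" and n=n and \<delta>=\<delta>])
    fix j y assume j: "j < n" and y: "y \<in> {-\<delta>..\<delta>}"
    then have "y \<in> {-a<..<a}" using \<open>\<delta> < \<eta>\<close> \<open>\<eta> < a\<close> by auto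
    then show "(nth_deriv j f has_vector_derivative nth_deriv (Suc j) f y) (at y)"
      by (rule smooth_on_interval_has_derivative[OF smooth])
    assume "y \<noteq> 0"
    have "\<bar>y\<bar> < \<eta>" using y \<open>\<delta> < \<eta>\<close> by auto
    show "norm (nth_deriv (Suc j) f y) \<le> (M + 1) * (\<Sum>i<n. norm (nth_deriv i f y))"
    proof (rule ode_derivative_bound[OF _ _ _ j])
      show "nth_deriv n f y + (\<Sum>i<n. A i y (f y) * nth_deriv i f y) = 0"
        using ode \<open>y \<in> {-a<..<a}\<close> \<open>y \<noteq> 0\<close> by blast
      show "norm (A i y (f y)) \<le> M" if "i < n" for i
        using coeff \<open>\<bar>y\<bar> < \<eta>\<close> \<open>y \<noteq> 0\<close> that by simp
    qed (use \<open>M > 0\<close> in simp)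
  qed (use \<open>M > 0\<close> small init that in auto)
  show "\<exists>\<delta>>0. \<forall>x\<in>{-\<delta>..\<delta>}. f x = 0"
    using vanish[of 0] \<open>1 \<le> n\<close> \<open>0 < \<delta>\<close> by auto
qed

theorem corollary3:
  shows "corollary3_claim TYPE(real) \<and> corollary3_claim TYPE(complex)"
  using corollary3_claim_any_field corollary3_claim_any_field by blast

end
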